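(* If $\pi$ is an irreducible permutation on a finite alphabet $\mathcal{A}$ with $\pi=\pi^{-1}$, then $\pi$ has at least $g(\pi)$ transpositions, i.e. the map $\pi_{\mathcal{A}}=\pi_0^{-1}\circ\pi_1$ has at least $g(\pi)$ orbits of size two.
   Context: $\pi=(\pi_0,\pi_1)$ with bijections $\pi_\varepsilon:\mathcal{A}\to\{1,\dots,d\}$, irreducible (no $k<d$ with $\pi_0^{-1}(\{1..k\})=\pi_1^{-1}(\{1..k\})$); $\pi^{-1}=(\pi_1,\pi_0)$. The genus $g(\pi)$ is $\tfrac12\mathrm{rank}(\Omega_\pi)$, where $(\Omega_\pi)_{\alpha,\beta}=1$ if $\pi_0(\alpha)<\pi_0(\beta)$ and $\pi_1(\alpha)>\pi_1(\beta)$, $-1$ if $\pi_0(\alpha)>\pi_0(\beta)$ and $\pi_1(\alpha)<\pi_1(\beta)$, $0$ otherwise (equivalently, the genus of any translation surface suspended over $\pi$). *)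

theory Defs
  imports "HOL-Analysis.Analysis"
begin

definition is_perm :: "('a::finite \<Rightarrow> nat) \<Rightarrow> ('a \<Rightarrow> nat) \<Rightarrow> bool" where
  "is_perm p0 p1 \<longleftrightarrow> bij_betw p0 UNIV {1..CARD('a)} \<and> bij_betw p1 UNIV {1..CARD('a)}"

definition irreducible_perm :: "('a::finite \<Rightarrow> nat) \<Rightarrow> ('a \<Rightarrow> nat) \<Rightarrow> bool" where
  "irreducible_perm p0 p1 \<longleftrightarrow>
     \<not> (\<exists>k. 1 \<le> k \<and> k < CARD('a) \<and> p0 -` {1..k} = p1 -` {1..k})"

text \<open>Equality of permutations up to renaming of the alphabet (reduced permutations):
(q0,q1) equals (p0,p1) if q = p \<circ> tau for a bijection tau of the alphabet.\<close>
definition perm_equiv :: "('a \<Rightarrow> nat) \<Rightarrow> ('a \<Rightarrow> nat) \<Rightarrow> ('a \<Rightarrow> nat) \<Rightarrow> ('a \<Rightarrow> nat) \<Rightarrow> bool" where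
  "perm_equiv p0 p1 q0 q1 \<longleftrightarrow> (\<exists>tau. bij tau \<and> q0 = p0 \<circ> tau \<and> q1 = p1 \<circ> tau)"

text \<open>pi = pi^{-1}, where pi^{-1} = (p1, p0).\<close>
definition self_inverse_perm :: "('a \<Rightarrow> nat) \<Rightarrow> ('a \<Rightarrow> nat) \<Rightarrow> bool" where
  "self_inverse_perm p0 p1 \<longleftrightarrow> perm_equiv p0 p1 p1 p0"

definition Omega :: "('a::finite \<Rightarrow> nat) \<Rightarrow> ('a \<Rightarrow> nat) \<Rightarrow> real^'a^'a" where
  "Omega p0 p1 = (\<chi> \<alpha> \<beta>.
     if p0 \<alpha> < p0 \<beta> \<and> p1 \<alpha> > p1 \<beta> then 1
     else if p0 \<alpha> > p0 \<beta> \<and> p1 \<alpha> < p1 \<beta> then -1 else 0)"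

definition genus :: "('a::finite \<Rightarrow> nat) \<Rightarrow> ('a \<Rightarrow> nat) \<Rightarrow> real" where
  "genus p0 p1 = real (rank (Omega p0 p1)) / 2"

definition monodromy :: "('a::finite \<Rightarrow> nat) \<Rightarrow> ('a \<Rightarrow> nat) \<Rightarrow> 'a \<Rightarrow> 'a" where
  "monodromy p0 p1 = inv p0 \<circ> p1"

definition orbits_size_two :: "('a \<Rightarrow> 'a) \<Rightarrow> 'a set set" where
  "orbits_size_two f = {{a, f a} | a. f a \<noteq> a \<and> f (f a) = a}"

end

theory Submission
  imports Defs
begin

text \<open>Self-inverseness means \<open>p1 = p0 \<circ> \<tau>\<close> for an involution \<open>\<tau>\<close> of the alphabet,
which is the monodromy. With \<open>L\<close> the order matrix of \<open>p0\<close> and \<open>P\<close> the permutation matrix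
of \<open>\<tau>\<close>, one gets \<open>\<Omega> = L - P L P = (I - P) L + P L (I - P)\<close>, so \<open>rank \<Omega> \<le> 2 rank (I - P)\<close>;
and the rows of \<open>I - P\<close> are \<open>\<plusminus>(e\<^sub>a - e\<^sub>\<tau>\<^sub>a)\<close> for the 2-cycles \<open>{a, \<tau> a}\<close> of \<open>\<tau>\<close>, or zero.\<close>

lemma matrix_diff_ldistrib: "(A::'a::ring_1^'n^'m) ** (B - C) = A ** B - A ** (C::'a^'p^'n)"
  by (simp add: matrix_matrix_mult_def vec_eq_iff sum_subtractf algebra_simps)

lemma matrix_diff_rdistrib: "((A::'a::ring_1^'n^'m) - B) ** (C::'a^'p^'n) = A ** C - B ** C"
  by (simp add: matrix_matrix_mult_def vec_eq_iff sum_subtractf algebra_simps)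

lemma rank_add_le: "rank ((A::real^'n^'m) + B) \<le> rank A + rank B"
proof -
  let ?S = "range (\<lambda>x. A *v x)" and ?T = "range (\<lambda>x. B *v x)"
  have S: "subspace ?S" and T: "subspace ?T"
    by (auto intro!: linear_subspace_image subspace_UNIV simp: matrix_vector_mul_linear)
  have "range (\<lambda>x. (A + B) *v x) \<subseteq> {x + y |x y. x \<in> ?S \<and> y \<in> ?T}"
    by (auto simp: matrix_vector_mult_add_rdistrib)
  then have "dim (range (\<lambda>x. (A + B) *v x)) \<le> dim {x + y |x y. x \<in> ?S \<and> y \<in> ?T}"
    by (rule dim_subset)
  also have "\<dots> \<le> dim ?S + dim ?T"
    using dim_sums_Int[OF S T] by linarith
  finally show ?thesis
    by (simp add: rank_dim_range)
qed

lemma rank_diff_conj_le: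
  fixes A P :: "real^'n^'n"
  shows "rank (A - P ** A ** P) \<le> 2 * rank (mat 1 - P)"
proof -
  have "A - P ** A ** P = (mat 1 - P) ** A + P ** A ** (mat 1 - P)"
    by (simp add: matrix_diff_ldistrib matrix_diff_rdistrib)
  then have "rank (A - P ** A ** P) \<le> rank ((mat 1 - P) ** A) + rank (P ** A ** (mat 1 - P))"
    by (simp add: rank_add_le)
  also have "\<dots> \<le> rank (mat 1 - P) + rank (mat 1 - P)"
    using rank_mul_le_left rank_mul_le_right add_mono by blast
  finally show ?thesis
    by simp
qed

definition perm_matrix :: "('n \<Rightarrow> 'n) \<Rightarrow> 'a::zero_neq_one^'n^'n" where
  "perm_matrix s = (\<chi> i j. if j = s i then 1 else 0)"

lemma perm_matrix_mult_nth:
  "(perm_matrix s ** (A::'a::semiring_1^'m^'n::finite)) $ i $ j = A $ s i $ j"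
proof -
  have "(perm_matrix s ** A) $ i $ j = (\<Sum>k\<in>UNIV. if k = s i then A $ k $ j else 0)"
    unfolding matrix_matrix_mult_def perm_matrix_def vec_lambda_beta by (intro sum.cong) auto
  then show ?thesis
    by simp
qed

lemma mult_perm_matrix_nth:
  assumes "bij s"
  shows "((A::'a::semiring_1^'n::finite^'m) ** perm_matrix s) $ i $ j = A $ i $ inv s j"
proof -
  have "j = s k \<longleftrightarrow> k = inv s j" for k
    using assms by (auto simp: bij_inv_eq_iff)
  then have "(A ** perm_matrix s) $ i $ j = (\<Sum>k\<in>UNIV. if k = inv s j then A $ i $ k else 0)"
    unfolding matrix_matrix_mult_def perm_matrix_def vec_lambda_beta by (intro sum.cong) auto
  then show ?thesis
    by simp
qed

lemma rank_id_minus_perm_matrix_le: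
  fixes s :: "'n::finite \<Rightarrow> 'n"
  assumes inv: "\<And>x. s (s x) = x"
  shows "rank (mat 1 - perm_matrix s :: real^'n^'n) \<le> card (orbits_size_two s)"
proof -
  let ?M = "mat 1 - perm_matrix s :: real^'n^'n"
  define e where "e X = axis (SOME a. a \<in> X) (1::real) - axis (s (SOME a. a \<in> X)) 1"
    for X :: "'n set"
  have row: "row i ?M = axis i 1 - axis (s i) 1" for i
    by (simp add: row_def vec_eq_iff axis_def mat_def perm_matrix_def)
  have "row i ?M \<in> span (e ` orbits_size_two s)" for i
  proof (cases "s i = i")
    case True
    then show ?thesis
      by (simp add: row span_zero)
  next
    case False
    then have orbit: "{i, s i} \<in> orbits_size_two s"
      unfolding orbits_size_two_def using inv by blast
    have "(SOME a. a \<in> {i, s i}) \<in> {i, s i}"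
      by (rule someI) auto
    then have "row i ?M = e {i, s i} \<or> row i ?M = - e {i, s i}"
      by (auto simp: row e_def inv)
    then show ?thesis
      using orbit by (metis image_eqI span_base span_neg)
  qed
  then have "rows ?M \<subseteq> span (e ` orbits_size_two s)"
    by (auto simp: rows_def)
  then have "dim (rows ?M) \<le> card (e ` orbits_size_two s)"
    by (rule dim_le_card) simp
  also have "\<dots> \<le> card (orbits_size_two s)"
    by (rule card_image_le) simp
  finally show ?thesis
    by (simp add: row_rank_def)
qed

definition order_matrix :: "('n \<Rightarrow> nat) \<Rightarrow> real^'n^'n" where
  "order_matrix p = (\<chi> i j. if p i < p j then 1 else 0)"

lemma Omega_eq_order_matrix_diff:
  assumes "inj p0" "inj p1"
  shows "Omega p0 p1 = order_matrix p0 - order_matrix p1"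
proof -
  have "Omega p0 p1 $ i $ j = order_matrix p0 $ i $ j - order_matrix p1 $ i $ j" for i j
  proof (cases "i = j")
    case False
    then have "p0 i \<noteq> p0 j" "p1 i \<noteq> p1 j"
      using assms by (auto simp: inj_eq)
    then show ?thesis
      by (auto simp: Omega_def order_matrix_def)
  qed (simp add: Omega_def order_matrix_def)
  then show ?thesis
    by (simp add: vec_eq_iff)
qed

lemma order_matrix_comp_involution:
  assumes inv: "\<And>x. s (s x) = x"
  shows "order_matrix (p \<circ> s) = perm_matrix s ** order_matrix p ** perm_matrix s"
proof -
  have "s \<circ> s = id"
    using inv by (simp add: fun_eq_iff)
  then have "bij s" and "inv s = s"
    by (simp_all add: o_bij inv_unique_comp)
  then show ?thesis
    by (simp add: vec_eq_iff mult_perm_matrix_nth perm_matrix_mult_nth order_matrix_def)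
qed

lemma self_inverse_perm_involution:
  assumes "inj p0" "self_inverse_perm p0 p1"
  obtains \<tau> where "\<And>x. \<tau> (\<tau> x) = x" "p1 = p0 \<circ> \<tau>"
proof -
  obtain \<tau> where \<tau>: "p1 = p0 \<circ> \<tau>" "p0 = p1 \<circ> \<tau>"
    using assms(2) unfolding self_inverse_perm_def perm_equiv_def by auto
  then have "p0 (\<tau> (\<tau> x)) = p0 x" for x
    by (metis comp_apply)
  then have "\<tau> (\<tau> x) = x" for x
    using assms(1) by (meson injD)
  then show ?thesis
    using that \<tau>(1) by blast
qed

lemma monodromy_comp: "inj p0 \<Longrightarrow> monodromy p0 (p0 \<circ> s) = s"
  by (simp add: monodromy_def fun_eq_iff)

theorem mainTheorem9:
  fixes p0 p1 :: "'a::finite \<Rightarrow> nat"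
  assumes "is_perm p0 p1"
    and "irreducible_perm p0 p1"
    and "self_inverse_perm p0 p1"
  shows "real (card (orbits_size_two (monodromy p0 p1))) \<ge> genus p0 p1"
proof -
  have inj: "inj p0" "inj p1"
    using assms(1) unfolding is_perm_def bij_betw_def by auto
  obtain \<tau> where \<tau>: "\<And>x. \<tau> (\<tau> x) = x" "p1 = p0 \<circ> \<tau>"
    using self_inverse_perm_involution[OF inj(1) assms(3)] by blast
  let ?L = "order_matrix p0" and ?P = "perm_matrix \<tau> :: real^'a^'a"
  have "Omega p0 p1 = ?L - ?P ** ?L ** ?P"
    using Omega_eq_order_matrix_diff[OF inj] \<tau> by (simp add: order_matrix_comp_involution)
  then have "rank (Omega p0 p1) \<le> 2 * rank (mat 1 - ?P)"
    by (simp add: rank_diff_conj_le)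
  also have "\<dots> \<le> 2 * card (orbits_size_two \<tau>)"
    using rank_id_minus_perm_matrix_le[OF \<tau>(1)] by simp
  finally show ?thesis
    unfolding genus_def \<tau>(2) monodromy_comp[OF inj(1)] by simp
qed

end
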